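(* Let $d\ge 2$ and $m\ge 1$. Let $h_0,\ldots,h_{m-1}$ be $m$ distinct hyperplanes in $\mathbb{R}^d$ that all contain a common $(d-2)$-flat $\ell$, dividing $\mathbb{R}^d$ into $2m$ parts (the connected components of the complement of their union). Let $P=\{p_0,\ldots,p_{2m-1}\}$ consist of $2m$ points, one from each part. Then at least $\frac{(m+1)m(m-1)}{3}$ of the triangles with vertices in $P$ intersect $\ell$.
   Context: A $(d-2)$-flat is a $(d-2)$-dimensional affine subspace of $\mathbb{R}^d$. A triangle with vertices in $P$ is the closed convex hull of a $3$-element subset of $P$. *)

theory Defs
  imports "HOL-Analysis.Analysis"
begin

definition is_hyperplane :: "'a::euclidean_space set \<Rightarrow> bool" where
  "is_hyperplane H \<longleftrightarrow> (\<exists>a b. a \<noteq> 0 \<and> H = {x. a \<bullet> x = b})"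

end

theory Submission
  imports Defs
begin

text \<open>
  Choose coordinates orthogonal to the flat: then the flat becomes the origin of the plane, the
  hyperplanes become \<open>m\<close> lines through the origin, and a triangle meets the flat iff its
  projection contains the origin. A planar triangle misses the origin exactly when one vertex
  \<open>p\<close> sees the other two strictly on its left, so the missing triangles are counted by
  \<open>\<Sum>p. C(k p, 2)\<close>, where \<open>k p\<close> is the number of points left of \<open>p\<close>.
  Since the \<open>2m\<close> points lie in distinct cells, an open half-plane bounded by a line through
  the origin contains at most \<open>m\<close> points, and at most \<open>m - 1\<close> if the opposite ray is
  occupied; hence \<open>k p \<in> {m - 1, m}\<close>, and \<open>\<Sum>p. k p \<le> m (2m - 1)\<close> because every pair
  is counted at most once. This gives at most \<open>m (m - 1)\<^sup>2\<close> missing triangles out of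
  \<open>C(2m, 3)\<close>.
\<close>

lemma real_choose_two: "real (n choose 2) = real n * (real n - 1) / 2"
  by (simp add: binomial_gbinomial gbinomial_prod_rev numeral_2_eq_2 prod.atLeast0_lessThan_Suc)

lemma real_choose_three: "real (n choose 3) = real n * (real n - 1) * (real n - 2) / 6"
  by (simp add: binomial_gbinomial gbinomial_prod_rev numeral_3_eq_3 prod.atLeast0_lessThan_Suc algebra_simps)

section \<open>Cross products in the plane\<close>

definition cross2 :: "real \<times> real \<Rightarrow> real \<times> real \<Rightarrow> real" where
  "cross2 p q = fst p * snd q - snd p * fst q"

definition rot2 :: "real \<times> real \<Rightarrow> real \<times> real" where
  "rot2 p = (- snd p, fst p)"

lemma cross2_self [simp]: "cross2 p p = 0"
  by (simp add: cross2_def)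

lemma cross2_commute: "cross2 q p = - cross2 p q"
  by (simp add: cross2_def)

lemma cross2_add_right: "cross2 p (x + y) = cross2 p x + cross2 p y"
  and cross2_scaleR_right: "cross2 p (c *\<^sub>R x) = c * cross2 p x"
  by (simp_all add: cross2_def algebra_simps)

lemma inner_rot2: "rot2 p \<bullet> q = cross2 p q"
  by (simp add: rot2_def cross2_def inner_prod_def)

lemma inner_self_scaleR_eq: "(p \<bullet> p) *\<^sub>R q = (p \<bullet> q) *\<^sub>R p + cross2 p q *\<^sub>R rot2 p"
  by (simp add: prod_eq_iff rot2_def cross2_def inner_prod_def algebra_simps)

lemma cross2_eq_0_imp_scaleR:
  assumes "p \<noteq> 0" and "cross2 p q = 0"
  shows "q = ((p \<bullet> q) / (p \<bullet> p)) *\<^sub>R p"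
proof -
  have "p \<bullet> p \<noteq> 0" using assms(1) by simp
  then have "q = (1 / (p \<bullet> p)) *\<^sub>R ((p \<bullet> p) *\<^sub>R q)" by simp
  then show ?thesis using inner_self_scaleR_eq[of p q] assms(2) by simp
qed

lemma cyclic_combination_eq_0:
  "cross2 y z *\<^sub>R x + cross2 z x *\<^sub>R y + cross2 x y *\<^sub>R z = 0"
  by (simp add: prod_eq_iff cross2_def algebra_simps)

lemma zero_in_hull_if_cyclic:
  assumes "cross2 x y > 0" "cross2 y z > 0" "cross2 z x > 0"
  shows "0 \<in> convex hull {x, y, z}"
proof -
  define s where "s = cross2 y z + cross2 z x + cross2 x y"
  have "s > 0" using assms by (simp add: s_def)
  have "(cross2 y z / s) *\<^sub>R x + (cross2 z x / s) *\<^sub>R y + (cross2 x y / s) *\<^sub>R z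
      = (1 / s) *\<^sub>R (cross2 y z *\<^sub>R x + cross2 z x *\<^sub>R y + cross2 x y *\<^sub>R z)"
    by (simp add: scaleR_add_right)
  also have "\<dots> = 0" by (simp add: cyclic_combination_eq_0)
  finally have combo: "0 = (cross2 y z / s) *\<^sub>R x + (cross2 z x / s) *\<^sub>R y + (cross2 x y / s) *\<^sub>R z" ..
  have "cross2 y z / s + cross2 z x / s + cross2 x y / s = 1"
    using \<open>s > 0\<close> by (simp add: s_def add_divide_distrib [symmetric])
  moreover have "cross2 y z / s \<ge> 0" "cross2 z x / s \<ge> 0" "cross2 x y / s \<ge> 0"
    using assms \<open>s > 0\<close> by simp_all
  ultimately show ?thesis
    unfolding convex_hull_3 using combo by blast
qed

lemma zero_in_segment_if_opposite:
  assumes "c < 0" and "q = c *\<^sub>R p"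
  shows "0 \<in> closed_segment p q"
proof -
  have "0 = (1 - 1 / (1 - c)) *\<^sub>R p + (1 / (1 - c)) *\<^sub>R q"
    using assms by (simp add: field_simps scaleR_left_distrib [symmetric])
  then show ?thesis
    unfolding closed_segment_def using assms by fastforce
qed

lemma zero_notin_hull_if_apex:
  fixes p :: "real \<times> real"
  assumes "p \<noteq> 0" and apex: "\<forall>q\<in>T - {p}. cross2 p q > 0"
  shows "0 \<notin> convex hull T"
proof
  assume zero: "0 \<in> convex hull T"
  have hull_half: "convex hull (T - {p}) \<subseteq> {x. cross2 p x > 0}"
    using apex convex_halfspace_gt[of 0 "rot2 p"] by (intro hull_minimal) (auto simp: inner_rot2)
  show False
  proof (cases "T - {p} = {}")
    case True
    then have "convex hull T \<subseteq> {p}" by (metis Diff_eq_empty_iff convex_hull_singleton hull_mono)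
    with zero \<open>p \<noteq> 0\<close> show False by auto
  next
    case False
    have "convex hull T \<subseteq> convex hull (insert p (T - {p}))" by (intro hull_mono) blast
    with zero obtain u v b where uv: "u \<ge> 0" "v \<ge> 0" "u + v = 1"
      and b: "b \<in> convex hull (T - {p})" and combo: "u *\<^sub>R p + v *\<^sub>R b = 0"
      unfolding convex_hull_insert[OF False] by force
    have "v * cross2 p b = cross2 p (u *\<^sub>R p + v *\<^sub>R b)"
      by (simp add: cross2_add_right cross2_scaleR_right)
    then have "v * cross2 p b = 0" by (simp add: combo cross2_def)
    moreover have "cross2 p b > 0" using b hull_half by blast
    ultimately have "u = 1" "v = 0" using uv by auto
    with combo \<open>p \<noteq> 0\<close> show False by simp
  qed
qed

section \<open>Points in distinct cells of a pencil of lines through the origin\<close>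

locale sign_separated_points =
  fixes P :: "(real \<times> real) set" and n :: "nat \<Rightarrow> real \<times> real" and m :: nat
  assumes m_pos: "m \<ge> 1" and finite_P: "finite P" and card_P: "card P = 2 * m"
    and off_lines: "\<And>p i. p \<in> P \<Longrightarrow> i < m \<Longrightarrow> n i \<bullet> p \<noteq> 0"
    and sides_determine_point:
      "\<And>p q. p \<in> P \<Longrightarrow> q \<in> P \<Longrightarrow>
        (\<And>i. i < m \<Longrightarrow> n i \<bullet> p > 0 \<longleftrightarrow> n i \<bullet> q > 0) \<Longrightarrow> p = q"
begin

lemma nonzero: "p \<in> P \<Longrightarrow> p \<noteq> 0"
  using off_lines[of p 0] m_pos by auto

lemma collinear_imp_opposite:
  assumes "p \<in> P" "q \<in> P" "q \<noteq> p" "cross2 p q = 0"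
  obtains c where "c < 0" "q = c *\<^sub>R p"
proof -
  define c where "c = (p \<bullet> q) / (p \<bullet> p)"
  have q: "q = c *\<^sub>R p"
    unfolding c_def using cross2_eq_0_imp_scaleR nonzero assms by blast
  have "c \<noteq> 0" using q off_lines[of q 0] m_pos assms by auto
  moreover have "\<not> c > 0"
  proof
    assume "c > 0"
    then have "n i \<bullet> p > 0 \<longleftrightarrow> n i \<bullet> q > 0" for i
      using q by (simp add: zero_less_mult_iff)
    then show False using sides_determine_point assms by metis
  qed
  ultimately have "c < 0" by linarith
  with that q show ?thesis by blast
qed

lemma opposite_sides:
  assumes "p \<in> P" "q \<in> P" "q \<noteq> p" "cross2 p q = 0" "i < m"
  shows "n i \<bullet> q > 0 \<longleftrightarrow> \<not> n i \<bullet> p > 0"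
proof -
  obtain c where "c < 0" "q = c *\<^sub>R p" using collinear_imp_opposite assms by blast
  then show ?thesis using off_lines[of p i] assms by (auto simp: zero_less_mult_iff)
qed

definition antipodes :: "real \<times> real \<Rightarrow> (real \<times> real) set" where
  "antipodes p = {q \<in> P. q \<noteq> p \<and> cross2 p q = 0}"

lemma card_antipodes_le_1:
  assumes "p \<in> P"
  shows "card (antipodes p) \<le> 1"
proof -
  have "q = q'" if "q \<in> antipodes p" "q' \<in> antipodes p" for q q'
    using that opposite_sides[OF assms] sides_determine_point by (simp add: antipodes_def)
  then show ?thesis by (simp add: card_le_Suc0_iff_eq finite_P antipodes_def)
qed

definition halfplane :: "real \<Rightarrow> real \<times> real \<Rightarrow> (real \<times> real) set" where
  "halfplane s p = {q \<in> P. s * cross2 p q > 0}"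

text \<open>
  Points \<open>q\<close> of the half-plane \<open>halfplane s p\<close> are ordered by the cotangent of the angle
  from \<open>p\<close> to \<open>q\<close>; line \<open>i\<close> separates \<open>q\<close> from \<open>p\<close> exactly when this cotangent
  exceeds \<open>crossing s p i\<close>. Hence the set of lines crossed grows monotonically, and a point
  of the half-plane is determined by the number of lines crossed.
\<close>

definition cot_angle :: "real \<Rightarrow> real \<times> real \<Rightarrow> real \<times> real \<Rightarrow> real" where
  "cot_angle s p q = (p \<bullet> q) / (s * cross2 p q)"

definition crossing :: "real \<Rightarrow> real \<times> real \<Rightarrow> nat \<Rightarrow> real" where
  "crossing s p i = - (n i \<bullet> rot2 p) / (s * (n i \<bullet> p))"

lemma sign_on_halfplane:
  assumes "p \<in> P" "q \<in> halfplane s p" "i < m"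
  shows "cot_angle s p q \<noteq> crossing s p i"
    and "n i \<bullet> q > 0 \<longleftrightarrow> (n i \<bullet> p > 0 \<longleftrightarrow> crossing s p i < cot_angle s p q)"
proof -
  have q: "q \<in> P" and c: "s * cross2 p q > 0" using assms(2) by (auto simp: halfplane_def)
  have a: "n i \<bullet> p \<noteq> 0" and nq: "n i \<bullet> q \<noteq> 0" using off_lines assms(1,3) q by auto
  have pp: "p \<bullet> p > 0" using nonzero[OF assms(1)] by simp
  have s: "s \<noteq> 0" and cr: "cross2 p q \<noteq> 0" using c by auto
  have "(p \<bullet> p) * (n i \<bullet> q) = (p \<bullet> q) * (n i \<bullet> p) + cross2 p q * (n i \<bullet> rot2 p)"
    using arg_cong[OF inner_self_scaleR_eq[of p q], of "\<lambda>v. n i \<bullet> v"]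
    by (simp add: inner_add_right)
  also have "\<dots> = (s * cross2 p q) * ((n i \<bullet> p) * (cot_angle s p q - crossing s p i))"
    using a s cr by (simp add: cot_angle_def crossing_def field_simps)
  finally have key:
    "(p \<bullet> p) * (n i \<bullet> q) = (s * cross2 p q) * ((n i \<bullet> p) * (cot_angle s p q - crossing s p i))" .
  then show "cot_angle s p q \<noteq> crossing s p i" using pp nq by auto
  have "n i \<bullet> q > 0 \<longleftrightarrow> (n i \<bullet> p) * (cot_angle s p q - crossing s p i) > 0"
    using key pp c by (metis zero_less_mult_iff zero_less_mult_pos)
  then show "n i \<bullet> q > 0 \<longleftrightarrow> (n i \<bullet> p > 0 \<longleftrightarrow> crossing s p i < cot_angle s p q)"
    using a \<open>cot_angle s p q \<noteq> crossing s p i\<close> by (smt (verit) zero_less_mult_iff)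
qed

definition crossings :: "real \<Rightarrow> real \<times> real \<Rightarrow> real \<times> real \<Rightarrow> nat set" where
  "crossings s p q = {i. i < m \<and> crossing s p i < cot_angle s p q}"

lemma crossings_subset: "crossings s p q \<subseteq> {..<m}"
  by (auto simp: crossings_def)

lemma finite_crossings: "finite (crossings s p q)"
  using finite_subset[OF crossings_subset finite_lessThan] .

lemma sign_by_crossings:
  assumes "p \<in> P" "q \<in> halfplane s p" "i < m"
  shows "n i \<bullet> q > 0 \<longleftrightarrow> (n i \<bullet> p > 0 \<longleftrightarrow> i \<in> crossings s p q)"
  using sign_on_halfplane(2)[OF assms] assms(3) by (simp add: crossings_def)

lemma inj_on_card_crossings:
  assumes "p \<in> P"
  shows "inj_on (\<lambda>q. card (crossings s p q)) (halfplane s p)"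
proof -
  have key: "q = q'" if q: "q \<in> halfplane s p" and q': "q' \<in> halfplane s p"
    and le: "cot_angle s p q \<le> cot_angle s p q'" and eq: "card (crossings s p q) = card (crossings s p q')" for q q'
  proof -
    have "crossings s p q \<subseteq> crossings s p q'" using le by (auto simp: crossings_def)
    then have "crossings s p q = crossings s p q'"
      using eq by (simp add: card_subset_eq finite_crossings)
    then show "q = q'"
      using sides_determine_point sign_by_crossings[OF assms q] sign_by_crossings[OF assms q'] q q'
      by (simp add: halfplane_def)
  qed
  show ?thesis
  proof (rule inj_onI)
    fix q q' assume "q \<in> halfplane s p" "q' \<in> halfplane s p"
      and "card (crossings s p q) = card (crossings s p q')"
    with key[of q q'] key[of q' q] show "q = q'"
      by (cases "cot_angle s p q \<le> cot_angle s p q'") auto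
  qed
qed

lemma card_crossings_less:
  assumes "p \<in> P" "q \<in> halfplane s p"
  shows "card (crossings s p q) < m"
proof -
  have "crossings s p q \<noteq> {..<m}"
  proof
    assume "crossings s p q = {..<m}"
    then have "q = p"
      using sides_determine_point sign_by_crossings[OF assms] assms by (simp add: halfplane_def)
    then show False using assms(2) by (simp add: halfplane_def)
  qed
  then have "card (crossings s p q) \<noteq> m"
    using card_subset_eq[OF finite_lessThan crossings_subset[of s p q]] by (metis card_lessThan)
  moreover have "card (crossings s p q) \<le> m"
    using card_mono[OF finite_lessThan crossings_subset[of s p q]] by simp
  ultimately show ?thesis by linarith
qed

lemma crossings_nonempty:
  assumes "p \<in> P" "q \<in> halfplane s p" "q' \<in> antipodes p"
  shows "crossings s p q \<noteq> {}"
proof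
  assume "crossings s p q = {}"
  then have "q = q'"
    using sides_determine_point sign_by_crossings[OF assms(1,2)] opposite_sides[OF assms(1)] assms
    by (simp add: halfplane_def antipodes_def)
  then show False using assms(2,3) by (simp add: halfplane_def antipodes_def)
qed

lemma card_halfplane_le:
  assumes "p \<in> P"
  shows "card (halfplane s p) \<le> m"
proof -
  have "card (halfplane s p) \<le> card {..<m}"
    using card_crossings_less[OF assms] by (intro card_inj_on_le[OF inj_on_card_crossings[OF assms]]) auto
  then show ?thesis by simp
qed

lemma card_halfplane_le_if_antipode:
  assumes "p \<in> P" "antipodes p \<noteq> {}"
  shows "card (halfplane s p) \<le> m - 1"
proof -
  obtain q' where q': "q' \<in> antipodes p" using assms(2) by blast
  have "card (crossings s p q) \<in> {1..<m}" if "q \<in> halfplane s p" for q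
    using card_crossings_less[OF assms(1) that] crossings_nonempty[OF assms(1) that q']
      finite_crossings[of s p q] by (simp add: Suc_le_eq card_gt_0_iff)
  then have "card (halfplane s p) \<le> card {1..<m}"
    by (intro card_inj_on_le[OF inj_on_card_crossings[OF assms(1)]]) auto
  then show ?thesis by simp
qed

lemma card_halfplanes_antipodes:
  assumes "p \<in> P"
  shows "card (halfplane 1 p) + card (halfplane (-1) p) + card (antipodes p) = 2 * m - 1"
proof -
  have "P - {p} = halfplane 1 p \<union> halfplane (-1) p \<union> antipodes p"
    by (auto simp: halfplane_def antipodes_def)
  moreover have "card (P - {p}) = 2 * m - 1" using assms finite_P card_P by simp
  ultimately show ?thesis
    using finite_P by (simp add: card_Un_disjoint halfplane_def antipodes_def disjoint_iff)
qed

lemma card_halfplane_cases: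
  assumes "p \<in> P"
  shows "card (halfplane 1 p) = m - 1 \<or> card (halfplane 1 p) = m"
proof (cases "antipodes p = {}")
  case True
  then show ?thesis
    using card_halfplanes_antipodes[OF assms] card_halfplane_le[OF assms, of 1]
      card_halfplane_le[OF assms, of "-1"] by simp linarith
next
  case False
  have "finite (antipodes p)" by (simp add: antipodes_def finite_P)
  with False have "card (antipodes p) > 0" using card_gt_0_iff by blast
  then have "card (antipodes p) = 1" using card_antipodes_le_1[OF assms] by linarith
  then show ?thesis
    using card_halfplanes_antipodes[OF assms] card_halfplane_le_if_antipode[OF assms False, of 1]
      card_halfplane_le_if_antipode[OF assms False, of "-1"] m_pos by linarith
qed

definition apex :: "(real \<times> real) set \<Rightarrow> real \<times> real \<Rightarrow> bool" where
  "apex T p \<longleftrightarrow> p \<in> T \<and> T - {p} \<subseteq> halfplane 1 p"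

lemma zero_in_hull_iff_no_apex:
  assumes "T \<subseteq> P" "card T = 3"
  shows "0 \<in> convex hull T \<longleftrightarrow> \<not> (\<exists>p. apex T p)"
proof
  assume zero: "0 \<in> convex hull T"
  show "\<not> (\<exists>p. apex T p)"
  proof
    assume "\<exists>p. apex T p"
    then obtain p where "apex T p" ..
    then have "p \<in> T" "\<forall>q\<in>T - {p}. cross2 p q > 0" by (auto simp: apex_def halfplane_def)
    moreover from this have "p \<noteq> 0" using nonzero assms(1) by blast
    ultimately show False using zero_notin_hull_if_apex zero by blast
  qed
next
  assume no_apex: "\<not> (\<exists>p. apex T p)"
  obtain x y z where T: "T = {x, y, z}" and xyz: "x \<noteq> y" "y \<noteq> z" "x \<noteq> z"
    using assms(2) by (metis card_3_iff)
  have in_P: "x \<in> P" "y \<in> P" "z \<in> P" using assms(1) T by auto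
  show "0 \<in> convex hull T"
  proof (cases "cross2 x y = 0 \<or> cross2 y z = 0 \<or> cross2 z x = 0")
    case True
    then obtain a b where ab: "a \<in> T" "b \<in> T" "a \<in> P" "b \<in> P" "b \<noteq> a" "cross2 a b = 0"
      using T xyz in_P by blast
    obtain c where "c < 0" "b = c *\<^sub>R a" using collinear_imp_opposite[OF ab(3-6)] by blast
    then have "0 \<in> closed_segment a b" by (rule zero_in_segment_if_opposite)
    also have "closed_segment a b \<subseteq> convex hull T"
      using ab by (simp add: segment_convex_hull hull_mono)
    finally show ?thesis .
  next
    case False
    have "\<not> apex T x" "\<not> apex T y" "\<not> apex T z" using no_apex by blast+
    then have "\<not> (cross2 x y > 0 \<and> cross2 x z > 0)" "\<not> (cross2 y x > 0 \<and> cross2 y z > 0)"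
      "\<not> (cross2 z x > 0 \<and> cross2 z y > 0)"
      using T xyz in_P by (auto simp: apex_def halfplane_def)
    then have "(cross2 x y > 0 \<and> cross2 y z > 0 \<and> cross2 z x > 0)
        \<or> (cross2 x z > 0 \<and> cross2 z y > 0 \<and> cross2 y x > 0)"
      using False cross2_commute[of x y] cross2_commute[of y z] cross2_commute[of z x] by argo
    then show ?thesis
      using zero_in_hull_if_cyclic[of x y z] zero_in_hull_if_cyclic[of x z y] T
      by (auto simp: insert_commute)
  qed
qed

definition apex_triangles :: "real \<times> real \<Rightarrow> (real \<times> real) set set" where
  "apex_triangles p = insert p ` {S. S \<subseteq> halfplane 1 p \<and> card S = 2}"

lemma not_in_halfplane_self: "p \<notin> halfplane s p"
  by (simp add: halfplane_def)

lemma triangles_with_apex_eq: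
  "{T. T \<subseteq> P \<and> card T = 3 \<and> (\<exists>p. apex T p)} = (\<Union>p\<in>P. apex_triangles p)"
proof (intro equalityI subsetI)
  fix T assume "T \<in> {T. T \<subseteq> P \<and> card T = 3 \<and> (\<exists>p. apex T p)}"
  then obtain p where T: "T \<subseteq> P" "card T = 3" and "apex T p" by blast
  then have "p \<in> T" "T - {p} \<subseteq> halfplane 1 p" by (simp_all add: apex_def)
  moreover have "card (T - {p}) = 2" using T \<open>p \<in> T\<close> by (simp add: card_Diff_singleton_if)
  ultimately have "T \<in> apex_triangles p" unfolding apex_triangles_def
    by (intro image_eqI[where x = "T - {p}"]) auto
  then show "T \<in> (\<Union>p\<in>P. apex_triangles p)" using \<open>p \<in> T\<close> T by blast
next
  fix T assume "T \<in> (\<Union>p\<in>P. apex_triangles p)"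
  then obtain p where p: "p \<in> P" "T \<in> apex_triangles p" by blast
  then obtain S where S: "S \<subseteq> halfplane 1 p" "card S = 2" and T: "T = insert p S"
    unfolding apex_triangles_def by (elim imageE) blast
  have "p \<notin> S" using S(1) not_in_halfplane_self by blast
  moreover have "finite S" using S(2) by (simp add: card_ge_0_finite)
  ultimately have "card T = 3" using T S(2) by simp
  moreover have "T \<subseteq> P" using T S(1) p(1) by (auto simp: halfplane_def)
  moreover have "apex T p" using T S(1) by (auto simp: apex_def)
  ultimately show "T \<in> {T. T \<subseteq> P \<and> card T = 3 \<and> (\<exists>p. apex T p)}" by blast
qed

lemma card_apex_triangles: "card (apex_triangles p) = card (halfplane 1 p) choose 2"
proof -
  have "inj_on (insert p) {S. S \<subseteq> halfplane 1 p \<and> card S = 2}"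
    using not_in_halfplane_self by (intro inj_onI) (metis insert_ident subsetD mem_Collect_eq)
  then have "card (apex_triangles p) = card {S. S \<subseteq> halfplane 1 p \<and> card S = 2}"
    unfolding apex_triangles_def by (rule card_image)
  also have "\<dots> = card (halfplane 1 p) choose 2"
    by (rule n_subsets) (simp add: halfplane_def finite_P)
  finally show ?thesis .
qed

lemma apex_triangles_disjoint:
  assumes "p \<noteq> p'"
  shows "apex_triangles p \<inter> apex_triangles p' = {}"
proof -
  have "T \<notin> apex_triangles p'" if T: "T \<in> apex_triangles p" for T
  proof
    assume "T \<in> apex_triangles p'"
    then obtain S' where "S' \<subseteq> halfplane 1 p'" "T = insert p' S'"
      unfolding apex_triangles_def by (elim imageE) blast
    moreover obtain S where "S \<subseteq> halfplane 1 p" "T = insert p S"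
      using T unfolding apex_triangles_def by (elim imageE) blast
    ultimately have "p' \<in> halfplane 1 p" "p \<in> halfplane 1 p'" using assms by auto
    then show False using cross2_commute[of p p'] by (simp add: halfplane_def)
  qed
  then show ?thesis by blast
qed

lemma card_triangles_with_apex:
  "card {T. T \<subseteq> P \<and> card T = 3 \<and> (\<exists>p. apex T p)} = (\<Sum>p\<in>P. card (halfplane 1 p) choose 2)"
proof -
  have "finite (apex_triangles p)" for p
    unfolding apex_triangles_def using finite_P by (auto simp: halfplane_def)
  then show ?thesis
    unfolding triangles_with_apex_eq using apex_triangles_disjoint finite_P
    by (subst card_UN_disjoint) (auto simp: card_apex_triangles)
qed

lemma sum_card_halfplane_le: "(\<Sum>p\<in>P. card (halfplane 1 p)) \<le> m * (2 * m - 1)"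
proof -
  have swap: "(SIGMA p:P. halfplane 1 p) = prod.swap ` (SIGMA p:P. halfplane (-1) p)"
  proof (rule set_eqI)
    fix x :: "(real \<times> real) \<times> real \<times> real"
    obtain p q where x: "x = (p, q)" by (cases x)
    have "x \<in> (SIGMA p:P. halfplane 1 p) \<longleftrightarrow> (q, p) \<in> (SIGMA p:P. halfplane (-1) p)"
      unfolding x mem_Sigma_iff halfplane_def mem_Collect_eq using cross2_commute[of q p] by auto
    then show "x \<in> (SIGMA p:P. halfplane 1 p) \<longleftrightarrow> x \<in> prod.swap ` (SIGMA p:P. halfplane (-1) p)"
      unfolding x by (simp add: image_iff)
  qed
  have "(\<Sum>p\<in>P. card (halfplane 1 p)) = card (SIGMA p:P. halfplane 1 p)"
    using finite_P by (simp add: card_SigmaI halfplane_def)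
  also have "\<dots> = card (SIGMA p:P. halfplane (-1) p)"
    unfolding swap by (rule card_image) simp
  also have "\<dots> = (\<Sum>p\<in>P. card (halfplane (-1) p))"
    using finite_P by (simp add: card_SigmaI halfplane_def)
  finally have "2 * (\<Sum>p\<in>P. card (halfplane 1 p)) = (\<Sum>p\<in>P. card (halfplane 1 p) + card (halfplane (-1) p))"
    by (simp add: sum.distrib)
  also have "\<dots> \<le> (\<Sum>p\<in>P. 2 * m - 1)"
    using card_halfplanes_antipodes by (intro sum_mono) fastforce
  also have "\<dots> = 2 * m * (2 * m - 1)" by (simp add: card_P)
  finally show ?thesis by simp
qed

lemma card_triangles_with_apex_le:
  "real (card {T. T \<subseteq> P \<and> card T = 3 \<and> (\<exists>p. apex T p)}) \<le> real m * (real m - 1)^2"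
proof -
  define k where "k p = real (card (halfplane 1 p))" for p
  \<comment> \<open>On \<open>k \<in> {m - 1, m}\<close> the convex function \<open>C(k, 2)\<close> agrees with a linear one.\<close>
  have choose: "real (card (halfplane 1 p) choose 2) = (real m - 1) * k p - real m * (real m - 1) / 2"
    if "p \<in> P" for p
    using card_halfplane_cases[OF that] m_pos
    by (auto simp: k_def real_choose_two of_nat_diff field_simps)
  have "real (\<Sum>p\<in>P. card (halfplane 1 p)) \<le> real (m * (2 * m - 1))"
    using sum_card_halfplane_le by linarith
  then have sum_k: "(\<Sum>p\<in>P. k p) \<le> real m * (2 * real m - 1)"
    using m_pos by (simp add: k_def of_nat_diff)
  have "real (card {T. T \<subseteq> P \<and> card T = 3 \<and> (\<exists>p. apex T p)})
      = (\<Sum>p\<in>P. real (card (halfplane 1 p) choose 2))"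
    unfolding card_triangles_with_apex by (rule of_nat_sum)
  also have "\<dots> = (real m - 1) * (\<Sum>p\<in>P. k p) - real (card P) * (real m * (real m - 1) / 2)"
    by (simp add: choose sum_subtractf sum_distrib_left)
  also have "\<dots> \<le> (real m - 1) * (real m * (2 * real m - 1)) - 2 * real m * (real m * (real m - 1) / 2)"
    using sum_k m_pos card_P by (simp add: mult_left_mono)
  also have "\<dots> = real m * (real m - 1)^2"
    by (simp add: field_simps power2_eq_square)
  finally show ?thesis .
qed

theorem card_triangles_around_origin:
  "real (card {T. T \<subseteq> P \<and> card T = 3 \<and> 0 \<in> convex hull T}) \<ge> real ((m + 1) * m * (m - 1)) / 3"
proof -
  define All where "All = {T. T \<subseteq> P \<and> card T = 3}"
  define Apexed where "Apexed = {T. T \<subseteq> P \<and> card T = 3 \<and> (\<exists>p. apex T p)}"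
  have hull_eq: "{T. T \<subseteq> P \<and> card T = 3 \<and> 0 \<in> convex hull T} = All - Apexed"
    using zero_in_hull_iff_no_apex by (auto simp: All_def Apexed_def)
  have sub: "Apexed \<subseteq> All" and fin: "finite All" using finite_P by (auto simp: All_def Apexed_def)
  have "card All = 2 * m choose 3" using n_subsets[OF finite_P, of 3] card_P by (simp add: All_def)
  moreover have "card Apexed \<le> card All" using card_mono[OF fin sub] .
  ultimately have "real (card {T. T \<subseteq> P \<and> card T = 3 \<and> 0 \<in> convex hull T})
      = real (2 * m choose 3) - real (card Apexed)"
    unfolding hull_eq card_Diff_subset[OF finite_subset[OF sub fin] sub] by (simp add: of_nat_diff)
  also have "\<dots> \<ge> real (2 * m choose 3) - real m * (real m - 1)^2"
    using card_triangles_with_apex_le by (simp add: Apexed_def)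
  moreover have "real (2 * m choose 3) - real m * (real m - 1)^2 = real ((m + 1) * m * (m - 1)) / 3"
    using m_pos by (simp add: real_choose_three of_nat_diff field_simps power2_eq_square)
  ultimately show ?thesis by linarith
qed

end

section \<open>Reduction to the plane\<close>

lemma connected_component_if_same_sides:
  fixes a :: "nat \<Rightarrow> 'a::euclidean_space"
  assumes "\<forall>i<m. a i \<bullet> p \<noteq> b i" "\<forall>i<m. a i \<bullet> q \<noteq> b i"
    and "\<forall>i<m. a i \<bullet> p > b i \<longleftrightarrow> a i \<bullet> q > b i"
  shows "connected_component (- (\<Union>i<m. {x. a i \<bullet> x = b i})) p q"
proof (rule connected_componentI)
  define K where "K = (\<Inter>i<m. if a i \<bullet> p > b i then {x. a i \<bullet> x > b i} else {x. a i \<bullet> x < b i})"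
  show "connected K"
    unfolding K_def by (intro convex_connected convex_INT) (simp add: convex_halfspace_gt convex_halfspace_lt)
  show "K \<subseteq> - (\<Union>i<m. {x. a i \<bullet> x = b i})"
  proof
    fix x assume "x \<in> K"
    have "a i \<bullet> x \<noteq> b i" if "i < m" for i
    proof -
      have "x \<in> (if a i \<bullet> p > b i then {x. a i \<bullet> x > b i} else {x. a i \<bullet> x < b i})"
        using \<open>x \<in> K\<close> that unfolding K_def by blast
      then show ?thesis by (auto split: if_splits)
    qed
    then show "x \<in> - (\<Union>i<m. {x. a i \<bullet> x = b i})" by blast
  qed
  show "p \<in> K" "q \<in> K" using assms by (auto simp: K_def linorder_neq_iff)
qed

lemma eq_if_connected_component:
  assumes "P \<subseteq> S" "\<forall>C\<in>components S. card (P \<inter> C) = 1" "p \<in> P" "q \<in> P"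
    and "connected_component S p q"
  shows "p = q"
proof -
  have "connected_component_set S p \<in> components S" using assms(1,3) by (auto intro: componentsI)
  then obtain w where "P \<inter> connected_component_set S p = {w}"
    using assms(2) card_1_singletonE by blast
  moreover have "p \<in> connected_component_set S p" "q \<in> connected_component_set S p"
    using assms(1,3,5) by auto
  ultimately show ?thesis using assms(3,4) by (metis IntI singletonD)
qed

lemma convex_hull_affine_image:
  assumes "linear L"
  shows "(\<lambda>x. L (x - z)) ` (convex hull T) = convex hull ((\<lambda>x. L (x - z)) ` T)"
proof -
  have "(\<lambda>x. L (x - z)) ` (convex hull T) = L ` (\<lambda>x. - z + x) ` (convex hull T)"
    by (simp add: image_image)
  also have "\<dots> = L ` (convex hull ((\<lambda>x. - z + x) ` T))"
    by (simp only: convex_hull_translation)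
  also have "\<dots> = convex hull (L ` (\<lambda>x. - z + x) ` T)"
    by (rule convex_hull_linear_image[OF assms])
  also have "\<dots> = convex hull ((\<lambda>x. L (x - z)) ` T)"
    by (simp add: image_image)
  finally show ?thesis .
qed

lemma card_triangles_image:
  assumes "inj_on f P" and hull: "\<And>T. f ` (convex hull T) = convex hull (f ` T)"
  shows "card {T. T \<subseteq> P \<and> card T = 3 \<and> convex hull T \<inter> f -` {0} \<noteq> {}}
    = card {T. T \<subseteq> f ` P \<and> card T = 3 \<and> 0 \<in> convex hull T}"
proof -
  let ?meeting = "{T. T \<subseteq> P \<and> card T = 3 \<and> convex hull T \<inter> f -` {0} \<noteq> {}}"
  have card_eq: "card (f ` T) = card T" if "T \<subseteq> P" for T
    using card_image inj_on_subset[OF assms(1) that] by blast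
  have meets: "0 \<in> convex hull (f ` T) \<longleftrightarrow> convex hull T \<inter> f -` {0} \<noteq> {}" for T
  proof -
    have "0 \<in> f ` (convex hull T) \<longleftrightarrow> convex hull T \<inter> f -` {0} \<noteq> {}" by force
    then show ?thesis by (simp only: hull)
  qed
  have "{T. T \<subseteq> f ` P \<and> card T = 3 \<and> 0 \<in> convex hull T} = image f ` ?meeting"
  proof (intro equalityI subsetI)
    fix T' assume "T' \<in> {T. T \<subseteq> f ` P \<and> card T = 3 \<and> 0 \<in> convex hull T}"
    then obtain T where "T \<subseteq> P" "T' = f ` T" "card T' = 3" "0 \<in> convex hull T'"
      by (auto simp: subset_image_iff)
    then show "T' \<in> image f ` ?meeting"
      using card_eq meets by (intro image_eqI[where x = T]) auto
  next
    fix T' assume "T' \<in> image f ` ?meeting"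
    then obtain T where "T \<in> ?meeting" "T' = f ` T" by blast
    then show "T' \<in> {T. T \<subseteq> f ` P \<and> card T = 3 \<and> 0 \<in> convex hull T}"
      using card_eq meets by auto
  qed
  moreover have "inj_on (image f) ?meeting"
    using inj_on_image_Pow[OF assms(1)] by (rule inj_on_subset) auto
  ultimately show ?thesis by (simp add: card_image)
qed

lemma span_pair: "span {a, b} = {u *\<^sub>R a + v *\<^sub>R b | u v. True}"
proof -
  have "span {a, b} = {x. \<exists>u v. x - u *\<^sub>R a = v *\<^sub>R b}"
    by (simp add: span_insert span_singleton)
  also have "\<dots> = {u *\<^sub>R a + v *\<^sub>R b | u v. True}"
    by (auto simp: diff_eq_eq add.commute)
  finally show ?thesis .
qed

lemma orthogonal_comp_span_pair_iff:
  "x \<in> orthogonal_comp (span {a, b}) \<longleftrightarrow> a \<bullet> x = 0 \<and> b \<bullet> x = 0"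
proof
  assume "x \<in> orthogonal_comp (span {a, b})"
  moreover have "a \<in> span {a, b}" "b \<in> span {a, b}" by (simp_all add: span_base)
  ultimately show "a \<bullet> x = 0 \<and> b \<bullet> x = 0" unfolding orthogonal_comp_def orthogonal_def by blast
qed (auto simp: orthogonal_comp_def orthogonal_def span_pair inner_add_left)

lemma codim2_subspace_eq_orthogonal_comp:
  fixes S :: "'a::euclidean_space set"
  assumes "subspace S" "dim S = DIM('a) - 2" "independent {a, b}" "a \<noteq> b"
    and "\<forall>s\<in>S. a \<bullet> s = 0 \<and> b \<bullet> s = 0"
  shows "S = orthogonal_comp (span {a, b})"
proof (rule subspace_dim_equal)
  show "subspace S" "subspace (orthogonal_comp (span {a, b}))"
    by (simp_all add: assms(1) subspace_orthogonal_comp)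
  show "S \<subseteq> orthogonal_comp (span {a, b})"
    using assms(5) by (auto simp: orthogonal_comp_span_pair_iff)
  have "dim (span {a, b}) = 2" using dim_eq_card_independent[OF assms(3)] assms(4) by simp
  moreover have "dim {y \<in> UNIV. \<forall>x\<in>span {a, b}. orthogonal x y} + dim (span {a, b}) = dim (UNIV :: 'a set)"
    by (rule dim_subspace_orthogonal_to_vectors) auto
  ultimately show "dim (orthogonal_comp (span {a, b})) \<le> dim S"
    using assms(2) by (simp add: orthogonal_comp_def)
qed

lemma independent_normals:
  fixes a b :: "'a::euclidean_space"
  assumes "a \<noteq> 0" "b \<noteq> 0" "{x. a \<bullet> x = a \<bullet> z} \<noteq> {x. b \<bullet> x = b \<bullet> z}"
  shows "independent {a, b}" "a \<noteq> b"
proof -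
  have "a \<notin> span {b}"
  proof
    assume "a \<in> span {b}"
    then obtain k where "a = k *\<^sub>R b" by (auto simp: span_singleton)
    with assms show False by (auto simp: inner_diff_left[symmetric] simp del: inner_diff_left)
  qed
  then show "independent {a, b}" "a \<noteq> b" using assms(2) by (auto simp: independent_insert span_base)
qed

lemma pencil_coordinates:
  fixes A :: "nat \<Rightarrow> 'a::euclidean_space" and l :: "'a set"
  assumes "affine l" "aff_dim l = int DIM('a) - 2" "DIM('a) \<ge> 2" "1 < m"
    and "\<forall>i<m. A i \<noteq> 0" "{x. A 0 \<bullet> x = B 0} \<noteq> {x. A 1 \<bullet> x = B 1}"
    and "\<forall>i<m. \<forall>x\<in>l. A i \<bullet> x = B i"
  obtains L :: "'a \<Rightarrow> real \<times> real" and z n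
  where "linear L" "\<And>x. x \<in> l \<longleftrightarrow> L (x - z) = 0"
    "\<And>i x. i < m \<Longrightarrow> A i \<bullet> x - B i = n i \<bullet> L (x - z)"
proof -
  have "l \<noteq> {}" using assms(2,3) by auto
  then obtain z where z: "z \<in> l" by blast
  have B: "B i = A i \<bullet> z" if "i < m" for i using assms(7) z that by auto
  define S where "S = (\<lambda>x. x - z) ` l"
  have "subspace S" unfolding S_def using affine_diffs_subspace_subtract[OF assms(1) z] .
  moreover have "aff_dim l = int (dim S)"
    unfolding S_def by (rule aff_dim_eq_dim_subtract) (simp add: z hull_inc)
  then have "dim S = DIM('a) - 2" using assms(2,3) by linarith
  moreover have "independent {A 0, A 1}" "A 0 \<noteq> A 1"
    using independent_normals[of "A 0" "A 1" z] assms(4-6) B by auto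
  moreover have perp: "\<forall>s\<in>S. A i \<bullet> s = 0" if "i < m" for i
    using assms(7) B that by (auto simp: S_def inner_diff_right)
  ultimately have S: "S = orthogonal_comp (span {A 0, A 1})"
    using assms(4) by (intro codim2_subspace_eq_orthogonal_comp) auto
  have "A i \<in> span {A 0, A 1}" if "i < m" for i
  proof -
    have "A i \<in> orthogonal_comp S"
      using perp[OF that] by (auto simp: orthogonal_comp_def orthogonal_def inner_commute)
    then show ?thesis by (simp add: S orthogonal_comp_self)
  qed
  then have "\<forall>i<m. \<exists>u v. A i = u *\<^sub>R A 0 + v *\<^sub>R A 1" by (simp add: span_pair)
  then obtain u v where uv: "\<And>i. i < m \<Longrightarrow> A i = u i *\<^sub>R A 0 + v i *\<^sub>R A 1" by metis
  define L where "L y = (A 0 \<bullet> y, A 1 \<bullet> y)" for y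
  show ?thesis
  proof
    show "linear L" unfolding L_def by (rule linearI) (simp_all add: inner_add_right)
    show "x \<in> l \<longleftrightarrow> L (x - z) = 0" for x
    proof -
      have "x \<in> l \<longleftrightarrow> x - z \<in> S" unfolding S_def by force
      then show ?thesis by (simp add: S orthogonal_comp_span_pair_iff L_def zero_prod_def)
    qed
    show "A i \<bullet> x - B i = (u i, v i) \<bullet> L (x - z)" if "i < m" for i x
      using uv[OF that] B[OF that] by (simp add: L_def inner_add_left inner_diff_right algebra_simps)
  qed
qed

lemma hyperplane_pencil_coordinates:
  fixes h :: "nat \<Rightarrow> 'a::euclidean_space set"
  assumes "affine l" "aff_dim l = int DIM('a) - 2" "DIM('a) \<ge> 2" "1 < m"
    and "\<forall>i<m. is_hyperplane (h i)" "inj_on h {..<m}" "\<forall>i<m. l \<subseteq> h i"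
  obtains L :: "'a \<Rightarrow> real \<times> real" and z A B n
  where "linear L" "\<And>x. x \<in> l \<longleftrightarrow> L (x - z) = 0" "\<And>i. i < m \<Longrightarrow> h i = {x. A i \<bullet> x = B i}"
    "\<And>i x. i < m \<Longrightarrow> A i \<bullet> x - B i = n i \<bullet> L (x - z)"
proof -
  obtain A B where AB: "\<And>i. i < m \<Longrightarrow> A i \<noteq> 0 \<and> h i = {x. A i \<bullet> x = B i}"
    using assms(5) unfolding is_hyperplane_def by metis
  have "0 \<in> {..<m}" "1 \<in> {..<m}" using assms(4) by auto
  then have "h 0 \<noteq> h 1" using inj_onD[OF assms(6)] by (metis zero_neq_one)
  then have distinct: "{x. A 0 \<bullet> x = B 0} \<noteq> {x. A 1 \<bullet> x = B 1}" using AB assms(4) by simp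
  have nonzero: "\<forall>i<m. A i \<noteq> 0" using AB by simp
  have through_l: "\<forall>i<m. \<forall>x\<in>l. A i \<bullet> x = B i"
  proof (intro allI impI ballI)
    fix i x assume "i < m" "x \<in> l"
    then show "A i \<bullet> x = B i" using assms(7) AB[OF \<open>i < m\<close>] by auto
  qed
  obtain L :: "'a \<Rightarrow> real \<times> real" and z n
    where "linear L" "\<And>x. x \<in> l \<longleftrightarrow> L (x - z) = 0" "\<And>i x. i < m \<Longrightarrow> A i \<bullet> x - B i = n i \<bullet> L (x - z)"
    using pencil_coordinates[OF assms(1-4) nonzero distinct through_l] by metis
  with AB that show ?thesis by blast
qed

lemma sign_separated_projection:
  fixes A :: "nat \<Rightarrow> 'a::euclidean_space" and B :: "nat \<Rightarrow> real" and m :: nat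
    and L :: "'a \<Rightarrow> real \<times> real" and z :: 'a
  defines "H \<equiv> \<Union>i<m. {x. A i \<bullet> x = B i}" and "f \<equiv> \<lambda>x. L (x - z)"
  assumes coords: "\<And>i x. i < m \<Longrightarrow> A i \<bullet> x - B i = n i \<bullet> f x"
    and "P \<subseteq> - H" "\<forall>C\<in>components (- H). card (P \<inter> C) = 1"
    and "m \<ge> 1" "finite P" "card P = 2 * m"
  shows "inj_on f P" and "sign_separated_points (f ` P) n m"
proof -
  have off: "n i \<bullet> f p \<noteq> 0" if "p \<in> P" "i < m" for p i
    using assms(4) that coords[OF that(2), of p] by (auto simp: H_def)
  have same_sides_eq: "p = q"
    if "p \<in> P" "q \<in> P" "\<And>i. i < m \<Longrightarrow> n i \<bullet> f p > 0 \<longleftrightarrow> n i \<bullet> f q > 0" for p q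
  proof (rule eq_if_connected_component[OF assms(4,5) that(1,2)])
    have side: "A i \<bullet> x > B i \<longleftrightarrow> n i \<bullet> f x > 0" "A i \<bullet> x \<noteq> B i \<longleftrightarrow> n i \<bullet> f x \<noteq> 0"
      if "i < m" for i x
      using coords[OF that, of x] by auto
    show "connected_component (- H) p q"
      unfolding H_def using that off side by (intro connected_component_if_same_sides) auto
  qed
  show inj: "inj_on f P" by (rule inj_onI) (rule same_sides_eq; simp)
  show "sign_separated_points (f ` P) n m"
  proof
    show "1 \<le> m" "finite (f ` P)" "card (f ` P) = 2 * m"
      using assms(6-8) card_image[OF inj] by auto
    show "n i \<bullet> p \<noteq> 0" if "p \<in> f ` P" "i < m" for p i
      using that(1) by (rule imageE) (use off that(2) in simp)
    show "p = q" if p: "p \<in> f ` P" and q: "q \<in> f ` P"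
      and sides: "\<And>i. i < m \<Longrightarrow> n i \<bullet> p > 0 \<longleftrightarrow> n i \<bullet> q > 0" for p q
    proof -
      obtain p' where p': "p = f p'" "p' \<in> P" using p by (rule imageE)
      obtain q' where q': "q = f q'" "q' \<in> P" using q by (rule imageE)
      have "p' = q'" using p' q' sides by (intro same_sides_eq) simp_all
      then show ?thesis using p' q' by simp
    qed
  qed
qed

theorem corollary17:
  fixes h :: "nat \<Rightarrow> 'a::euclidean_space set"
    and l :: "'a set"
    and P :: "'a set"
    and m :: nat
  assumes "DIM('a) \<ge> 2"
    and "m \<ge> 1"
    and "affine l" and "aff_dim l = int DIM('a) - 2"
    and "\<forall>i<m. is_hyperplane (h i)"
    and "inj_on h {..<m}"
    and "\<forall>i<m. l \<subseteq> h i"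
    and "card (components (- (\<Union>i<m. h i))) = 2 * m"
    and "finite P" and "card P = 2 * m"
    and "P \<subseteq> - (\<Union>i<m. h i)"
    and "\<forall>C\<in>components (- (\<Union>i<m. h i)). card (P \<inter> C) = 1"
  shows "real (card {T. T \<subseteq> P \<and> card T = 3 \<and> convex hull T \<inter> l \<noteq> {}})
           \<ge> real ((m + 1) * m * (m - 1)) / 3"
proof (cases "m = 1")
  case True
  then show ?thesis by simp
next
  case False
  then have "1 < m" using assms(2) by simp
  obtain L :: "'a \<Rightarrow> real \<times> real" and z A B n
    where L: "linear L" "\<And>x. x \<in> l \<longleftrightarrow> L (x - z) = 0"
      and h: "\<And>i. i < m \<Longrightarrow> h i = {x. A i \<bullet> x = B i}"
      and coords: "\<And>i x. i < m \<Longrightarrow> A i \<bullet> x - B i = n i \<bullet> L (x - z)"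
    using hyperplane_pencil_coordinates[OF assms(3,4,1) \<open>1 < m\<close> assms(5-7)] by blast
  define f where "f = (\<lambda>x. L (x - z))"
  have "(\<Union>i<m. h i) = (\<Union>i<m. {x. A i \<bullet> x = B i})" using h by simp
  then have inj: "inj_on f P" and planar: "sign_separated_points (f ` P) n m"
    using sign_separated_projection[of m A B n L z P] coords assms(2,9-12) by (simp_all add: f_def)
  interpret sign_separated_points "f ` P" n m by (fact planar)
  have "l = f -` {0}" using L(2) unfolding f_def by blast
  then have "card {T. T \<subseteq> P \<and> card T = 3 \<and> convex hull T \<inter> l \<noteq> {}}
      = card {T. T \<subseteq> f ` P \<and> card T = 3 \<and> 0 \<in> convex hull T}"
    using card_triangles_image[OF inj] convex_hull_affine_image[OF L(1)] unfolding f_def by presburger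
  then show ?thesis using card_triangles_around_origin by simp
qed

end
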